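(* For $K>\hat K^*:=\frac{b\sigma_2}{b-\mu_0}$ let $G_4(K)=(S(K),0,I_2(K),0,R(K))$ be the unique equilibrium of the system below with $S,I_2,R>0$. Then $K\mapsto I_2(K)$ is strictly increasing, $K\mapsto S(K)$ is strictly decreasing, and for all $K>\hat K^*$ $$0<I_2(K)<\frac{\mu_4'-\mu_0}{\alpha_2},\qquad \frac{\mu_2-\mu_4'}{\alpha_2}<S(K)<\frac{\mu_2-\mu_0}{\alpha_2}.$$ Moreover, with $R^{**}=\frac{K}{b}(b-\mu_4')$, as $K\to\infty$, $$R(K)=R^{**}+O(1),\qquad I_2(K)=\frac{\mu_4'-\mu_0}{\alpha_2}+O\!\left(\frac1K\right),\qquad S(K)=\frac{\mu_2-\mu_4'}{\alpha_2}+O\!\left(\frac1K\right).$$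
   Context: Consider, for $t\ge0$, the system $S'=\big(b(1-\tfrac{N}{K})-\alpha_1I_1-\alpha_2I_2-(\beta_1+\beta_2+\alpha_3)I_{12}-\mu_0\big)S$, $I_1'=\big(b(1-\tfrac{N}{K})+\alpha_1S-\eta_1I_{12}-\gamma_1I_2-\mu_1\big)I_1+\beta_1SI_{12}$, $I_2'=\big(b(1-\tfrac{N}{K})+\alpha_2S-\eta_2I_{12}-\gamma_2I_1-\mu_2\big)I_2+\beta_2SI_{12}$, $I_{12}'=\big(b(1-\tfrac{N}{K})+\alpha_3S+\eta_1I_1+\eta_2I_2-\mu_3\big)I_{12}+(\gamma_1+\gamma_2)I_1I_2$, $R'=\big(b(1-\tfrac{N}{K})-\mu_4'\big)R+\rho_1I_1+\rho_2I_2+\rho_3I_{12}$, where $N=S+I_1+I_2+I_{12}+R$. All parameters $b,K,\alpha_i,\beta_i,\gamma_i,\eta_i,\rho_i,\mu_0,\mu_i'$ are positive and $\mu_i=\rho_i+\mu_i'$ for $i=1,2,3$; $K$ is regarded as a varying parameter, the others fixed. Standing assumptions: $b>\mu_0$, $b>\mu_i$ ($i=1,2,3$), $b>\mu_4'$, and $\mu_0<\mu_4'<\mu_j'$ for $j=1,2,3$. Set $\sigma_k=(\mu_k-\mu_0)/\alpha_k$ ($k=1,2,3$), assumed to satisfy $\sigma_1<\sigma_2<\sigma_3$, and $S^{**}=\frac{K}{b}(b-\mu_0)$. *)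

theory Defs
  imports Complex_Main "HOL-Library.Landau_Symbols"
begin

text \<open>Parameter order:
  b K a1 a2 a3 (alpha_i) be1 be2 (beta_i) g1 g2 (gamma_i) e1 e2 (eta_i)
  r1 r2 r3 (rho_i) m0 (mu_0) m1' m2' m3' m4' (mu_i').  mu_i = rho_i + mu_i'.\<close>

definition is_equilibrium ::
  "real \<Rightarrow> real \<Rightarrow> real \<Rightarrow> real \<Rightarrow> real \<Rightarrow> real \<Rightarrow> real \<Rightarrow> real \<Rightarrow> real \<Rightarrow>
   real \<Rightarrow> real \<Rightarrow> real \<Rightarrow> real \<Rightarrow> real \<Rightarrow> real \<Rightarrow> real \<Rightarrow> real \<Rightarrow> real \<Rightarrow> real \<Rightarrow>
   real \<Rightarrow> real \<Rightarrow> real \<Rightarrow> real \<Rightarrow> real \<Rightarrow> bool" where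
  "is_equilibrium b K a1 a2 a3 be1 be2 g1 g2 e1 e2 r1 r2 r3 m0 m1' m2' m3' m4' S I1 I2 I12 R \<longleftrightarrow>
    (let N = S + I1 + I2 + I12 + R; B = b * (1 - N / K);
         m1 = r1 + m1'; m2 = r2 + m2'; m3 = r3 + m3' in
     (B - a1 * I1 - a2 * I2 - (be1 + be2 + a3) * I12 - m0) * S = 0 \<and>
     (B + a1 * S - e1 * I12 - g1 * I2 - m1) * I1 + be1 * S * I12 = 0 \<and>
     (B + a2 * S - e2 * I12 - g2 * I1 - m2) * I2 + be2 * S * I12 = 0 \<and>
     (B + a3 * S + e1 * I1 + e2 * I2 - m3) * I12 + (g1 + g2) * I1 * I2 = 0 \<and>
     (B - m4') * R + r1 * I1 + r2 * I2 + r3 * I12 = 0)"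

end

theory Submission
  imports Defs
begin

text \<open>On an equilibrium with \<open>I1 = I12 = 0\<close> and \<open>S, I2 > 0\<close> the \<open>S\<close>- and \<open>I2\<close>-equations
  force \<open>S + I2 = sigma2\<close>, and all of \<open>S, I2, R\<close> are determined by the single unknown
  \<open>u = m4' - b (1 - N/K)\<close>, which must be the positive root of a quadratic \<open>charpoly K\<close> with
  negative constant term. This root lies below \<open>m4' - m0\<close> (i.e. \<open>I2 > 0\<close>) exactly when \<open>K\<close>
  exceeds the threshold, it decreases in \<open>K\<close> because \<open>charpoly K u\<close> increases in \<open>K\<close>,
  and it is \<open>O(1/K)\<close> because \<open>u (u + b - m4')\<close> equals \<open>b/K\<close> times a bounded quantity.\<close>

definition pos_root :: "real \<Rightarrow> real \<Rightarrow> real" where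
  "pos_root p q = (- p + sqrt (p\<^sup>2 + 4 * q)) / 2"

lemma pos_root_factorization:
  assumes "q > 0"
  shows "pos_root p q > 0" "p + pos_root p q > 0"
    "u\<^sup>2 + p * u - q = (u - pos_root p q) * (u + p + pos_root p q)"
proof -
  define w where "w = sqrt (p\<^sup>2 + 4 * q)"
  have w_sq: "w\<^sup>2 = p\<^sup>2 + 4 * q"
    using assms by (simp add: w_def add_nonneg_pos)
  have "\<bar>p\<bar> < w"
    unfolding w_def using assms by (intro real_less_rsqrt) (simp add: power2_abs)
  then have "- p + w > 0" "p + w > 0" by linarith+
  moreover have root: "pos_root p q = (- p + w) / 2"
    by (simp add: pos_root_def w_def)
  ultimately show "pos_root p q > 0" "p + pos_root p q > 0"
    by simp_all
  show "u\<^sup>2 + p * u - q = (u - pos_root p q) * (u + p + pos_root p q)"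
    using w_sq unfolding root by (simp add: field_simps power2_eq_square)
qed

lemma pos_root_less_iff:
  assumes "q > 0" "u \<ge> 0"
  shows "pos_root p q < u \<longleftrightarrow> u\<^sup>2 + p * u - q > 0"
proof -
  have "u + p + pos_root p q > 0"
    using pos_root_factorization(2)[OF \<open>q > 0\<close>, of p] \<open>u \<ge> 0\<close> by linarith
  then show ?thesis
    by (simp add: pos_root_factorization(3)[OF \<open>q > 0\<close>] zero_less_mult_iff)
qed

lemma pos_root_eq_iff:
  assumes "q > 0" "u \<ge> 0"
  shows "u\<^sup>2 + p * u - q = 0 \<longleftrightarrow> u = pos_root p q"
proof -
  have "u + p + pos_root p q > 0"
    using pos_root_factorization(2)[OF \<open>q > 0\<close>, of p] \<open>u \<ge> 0\<close> by linarith
  then show ?thesis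
    by (simp add: pos_root_factorization(3)[OF \<open>q > 0\<close>])
qed

lemma is_equilibrium_I2_iff:
  assumes "s \<noteq> 0" "i \<noteq> 0"
  shows "is_equilibrium b K a1 a2 a3 be1 be2 g1 g2 e1 e2 r1 r2 r3 m0 m1' m2' m3' m4' s 0 i 0 r \<longleftrightarrow>
    (let B = b * (1 - (s + i + r) / K) in
     B - a2 * i - m0 = 0 \<and> B + a2 * s - (r2 + m2') = 0 \<and> (B - m4') * r + r2 * i = 0)"
  using assms unfolding is_equilibrium_def Let_def by auto

locale I2_equilibrium =
  fixes b a2 r2 m0 m2' m4' :: real
  assumes b_pos: "0 < b" and a2_pos: "0 < a2" and r2_pos: "0 < r2"
    and m0_less_m4': "m0 < m4'" and m4'_less_m2': "m4' < m2'" and m4'_less_b: "m4' < b"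
begin

definition sigma2 :: real where
  "sigma2 = (r2 + m2' - m0) / a2"

definition K_threshold :: real where
  "K_threshold = b * sigma2 / (b - m0)"

text \<open>The parameter \<open>u = m4' - b (1 - N/K)\<close> determines a candidate equilibrium with
  \<open>I2 = (m4' - m0 - u)/a2\<close>, \<open>S = sigma2 - I2\<close> and \<open>R = r2 I2 / u\<close>; its total population
  \<open>N\<close> satisfies \<open>u N = scaled_population u\<close>, and the defining relation for \<open>u\<close>, multiplied
  by \<open>u\<close>, becomes \<open>charpoly K u = 0\<close>.\<close>

definition scaled_population :: "real \<Rightarrow> real" where
  "scaled_population u = sigma2 * u + r2 * (m4' - m0 - u) / a2"

definition charpoly :: "real \<Rightarrow> real \<Rightarrow> real" where
  "charpoly K u = u\<^sup>2 + (b - m4') * u - b / K * scaled_population u"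

definition root :: "real \<Rightarrow> real" where
  "root K = pos_root (b - m4' - b * sigma2 / K + b * r2 / (a2 * K)) (b * r2 * (m4' - m0) / (a2 * K))"

definition I2 :: "real \<Rightarrow> real" where
  "I2 K = (m4' - m0 - root K) / a2"

definition S :: "real \<Rightarrow> real" where
  "S K = sigma2 - I2 K"

definition R :: "real \<Rightarrow> real" where
  "R K = r2 * I2 K / root K"

lemma sigma2_pos: "sigma2 > 0"
  using a2_pos r2_pos m0_less_m4' m4'_less_m2' by (simp add: sigma2_def)

lemma K_threshold_pos: "K_threshold > 0"
  using sigma2_pos b_pos m0_less_m4' m4'_less_b by (simp add: K_threshold_def)

lemma scaled_population_eq: "scaled_population u = ((m2' - m0) * u + r2 * (m4' - m0)) / a2"
  using a2_pos by (simp add: scaled_population_def sigma2_def field_simps)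

lemma scaled_population_pos: "u \<ge> 0 \<Longrightarrow> scaled_population u > 0"
  unfolding scaled_population_eq
  using a2_pos r2_pos m0_less_m4' m4'_less_m2' by (simp add: add_nonneg_pos)

lemma scaled_population_le: "u \<le> m4' - m0 \<Longrightarrow> scaled_population u \<le> sigma2 * (m4' - m0)"
proof -
  assume "u \<le> m4' - m0"
  then have "scaled_population u \<le> scaled_population (m4' - m0)"
    unfolding scaled_population_eq using a2_pos m0_less_m4' m4'_less_m2'
    by (simp add: divide_right_mono)
  then show ?thesis
    by (simp add: scaled_population_def)
qed

lemma charpoly_eq_root_iff:
  assumes "K > 0" "u \<ge> 0"
  shows "charpoly K u = 0 \<longleftrightarrow> u = root K"
    and "root K < u \<longleftrightarrow> charpoly K u > 0"
proof -
  have quadratic: "charpoly K u = u\<^sup>2 + (b - m4' - b * sigma2 / K + b * r2 / (a2 * K)) * u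
      - b * r2 * (m4' - m0) / (a2 * K)"
    using \<open>K > 0\<close> a2_pos by (simp add: charpoly_def scaled_population_def field_simps)
  have coeff_pos: "b * r2 * (m4' - m0) / (a2 * K) > 0"
    using \<open>K > 0\<close> a2_pos b_pos r2_pos m0_less_m4' by simp
  show "charpoly K u = 0 \<longleftrightarrow> u = root K"
    unfolding quadratic root_def by (rule pos_root_eq_iff[OF coeff_pos \<open>u \<ge> 0\<close>])
  show "root K < u \<longleftrightarrow> charpoly K u > 0"
    unfolding quadratic root_def by (rule pos_root_less_iff[OF coeff_pos \<open>u \<ge> 0\<close>])
qed

lemma root_pos: "K > 0 \<Longrightarrow> root K > 0"
  unfolding root_def using a2_pos b_pos r2_pos m0_less_m4'
  by (simp add: pos_root_factorization(1))

lemma charpoly_root: "K > 0 \<Longrightarrow> charpoly K (root K) = 0"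
  using charpoly_eq_root_iff(1)[of K "root K"] root_pos[of K] by simp

lemma root_less_above_threshold: "K_threshold < K \<Longrightarrow> root K < m4' - m0"
proof -
  assume "K_threshold < K"
  moreover have "K > 0"
    using \<open>K_threshold < K\<close> K_threshold_pos by linarith
  ultimately have "b * sigma2 / K < b - m0"
    using m0_less_m4' m4'_less_b
    by (simp add: K_threshold_def divide_less_eq pos_divide_less_eq mult.commute)
  moreover have "charpoly K (m4' - m0) = (m4' - m0) * (b - m0 - b * sigma2 / K)"
    by (simp add: charpoly_def scaled_population_def power2_eq_square diff_divide_distrib
        algebra_simps)
  ultimately show ?thesis
    using \<open>K > 0\<close> m0_less_m4' by (simp add: charpoly_eq_root_iff(2))
qed

lemma root_strict_antimono:
  assumes "0 < K1" "K1 < K2"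
  shows "root K2 < root K1"
proof -
  define u where "u = root K1"
  have "u > 0" using root_pos \<open>0 < K1\<close> by (simp add: u_def)
  have "b / K2 < b / K1"
    using assms b_pos by (simp add: frac_less2)
  then have "b / K2 * scaled_population u < b / K1 * scaled_population u"
    using scaled_population_pos[of u] \<open>u > 0\<close> by (intro mult_strict_right_mono) auto
  then have "charpoly K1 u < charpoly K2 u"
    unfolding charpoly_def by linarith
  then show ?thesis
    using charpoly_root[OF \<open>0 < K1\<close>] assms \<open>u > 0\<close>
    by (simp add: u_def charpoly_eq_root_iff(2))
qed

lemma equilibrium_strict_monotone:
  assumes "0 < K1" "K1 < K2"
  shows "I2 K1 < I2 K2" "S K2 < S K1"
  using root_strict_antimono[OF assms] a2_pos
  by (simp_all add: S_def I2_def divide_strict_right_mono)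

lemma scaled_root_bound:
  assumes "K_threshold < K"
  shows "K * root K \<le> b * sigma2 * (m4' - m0) / (b - m4')"
proof -
  define u where "u = root K"
  have "K > 0" using assms K_threshold_pos by simp
  have u: "0 < u" "u < m4' - m0"
    using root_pos[OF \<open>K > 0\<close>] root_less_above_threshold[OF assms] by (simp_all add: u_def)
  have "(b - m4') * u \<le> u\<^sup>2 + (b - m4') * u"
    by simp
  also have "\<dots> = b / K * scaled_population u"
    using charpoly_root[OF \<open>K > 0\<close>] by (simp add: u_def charpoly_def)
  also have "\<dots> \<le> b / K * (sigma2 * (m4' - m0))"
    using u \<open>K > 0\<close> b_pos by (intro mult_left_mono scaled_population_le) auto
  finally show ?thesis
    using \<open>K > 0\<close> m4'_less_b by (simp add: u_def field_simps)
qed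

lemma birth_factor_at_equilibrium:
  assumes "K > 0"
  shows "b * (1 - (S K + I2 K + R K) / K) = m4' - root K"
proof -
  have "root K > 0" using root_pos[OF assms] .
  then have "charpoly K (root K) = root K * (b * (1 - (S K + I2 K + R K) / K) - (m4' - root K))"
    using assms a2_pos
    by (simp add: charpoly_def scaled_population_def S_def R_def I2_def field_simps power2_eq_square)
  then show ?thesis
    using charpoly_root[OF assms] \<open>root K > 0\<close> by simp
qed

lemma positive_equilibrium_iff:
  assumes "K > 0" "s > 0" "i > 0" "r > 0"
  shows "is_equilibrium b K a1 a2 a3 be1 be2 g1 g2 e1 e2 r1 r2 r3 m0 m1' m2' m3' m4' s 0 i 0 r \<longleftrightarrow>
    s = S K \<and> i = I2 K \<and> r = R K"
proof
  assume "is_equilibrium b K a1 a2 a3 be1 be2 g1 g2 e1 e2 r1 r2 r3 m0 m1' m2' m3' m4' s 0 i 0 r"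
  then obtain u where u: "m4' - u - a2 * i - m0 = 0" "m4' - u + a2 * s - (r2 + m2') = 0"
      "- u * r + r2 * i = 0" and u_def: "u = m4' - b * (1 - (s + i + r) / K)"
    using assms by (auto simp: is_equilibrium_I2_iff Let_def)
  have i: "i = (m4' - m0 - u) / a2" and s: "s = sigma2 - i"
    using u a2_pos by (simp_all add: sigma2_def field_simps)
  have ur: "u * r = r2 * i" using u(3) by simp
  then have "u * r > 0" using r2_pos \<open>i > 0\<close> by simp
  then have "u > 0" using \<open>r > 0\<close> by (simp add: zero_less_mult_iff)
  then have r: "r = r2 * i / u" using ur by (simp add: field_simps)
  have "charpoly K u = 0"
    using u_def \<open>K > 0\<close> \<open>u > 0\<close> a2_pos b_pos unfolding i s r
    by (simp add: charpoly_def scaled_population_def field_simps power2_eq_square)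
  then have "u = root K" using charpoly_eq_root_iff(1) \<open>K > 0\<close> \<open>u > 0\<close> by simp
  then show "s = S K \<and> i = I2 K \<and> r = R K"
    using i s r by (simp add: S_def I2_def R_def)
next
  assume sir: "s = S K \<and> i = I2 K \<and> r = R K"
  then have nonzero: "S K \<noteq> 0" "I2 K \<noteq> 0" using assms by auto
  have "a2 * I2 K = m4' - m0 - root K" "a2 * S K = r2 + m2' - m4' + root K"
    using a2_pos by (simp_all add: S_def I2_def sigma2_def field_simps)
  moreover have "root K * R K = r2 * I2 K"
    using root_pos[OF \<open>K > 0\<close>] by (simp add: R_def)
  ultimately have "is_equilibrium b K a1 a2 a3 be1 be2 g1 g2 e1 e2 r1 r2 r3 m0 m1' m2' m3' m4'
      (S K) 0 (I2 K) 0 (R K)"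
    unfolding is_equilibrium_I2_iff[OF nonzero] Let_def birth_factor_at_equilibrium[OF \<open>K > 0\<close>]
    by (simp add: algebra_simps)
  then show "is_equilibrium b K a1 a2 a3 be1 be2 g1 g2 e1 e2 r1 r2 r3 m0 m1' m2' m3' m4' s 0 i 0 r"
    using sir by simp
qed

lemma equilibrium_bounds:
  assumes "K_threshold < K"
  shows "0 < I2 K" "I2 K < (m4' - m0) / a2" "0 < R K"
    "(r2 + m2' - m4') / a2 < S K" "S K < (r2 + m2' - m0) / a2" "0 < S K"
proof -
  have "K > 0" using assms K_threshold_pos by simp
  have u: "0 < root K" "root K < m4' - m0"
    using root_pos[OF \<open>K > 0\<close>] root_less_above_threshold[OF assms] .
  show "0 < I2 K" "I2 K < (m4' - m0) / a2"
    using u a2_pos by (simp_all add: I2_def divide_strict_right_mono)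
  then show "0 < R K" "S K < (r2 + m2' - m0) / a2"
    using u r2_pos by (simp_all add: R_def S_def sigma2_def)
  show "(r2 + m2' - m4') / a2 < S K"
    using u a2_pos by (simp add: S_def I2_def sigma2_def field_simps)
  moreover have "(r2 + m2' - m4') / a2 > 0"
    using a2_pos r2_pos m4'_less_m2' by simp
  ultimately show "0 < S K" by linarith
qed

lemma scaled_root_bigo: "(\<lambda>K. K * root K) \<in> O[at_top](\<lambda>_. 1)"
proof (rule bigoI)
  show "\<forall>\<^sub>F K in at_top. norm (K * root K) \<le> b * sigma2 * (m4' - m0) / (b - m4') * norm (1::real)"
    using eventually_gt_at_top[of K_threshold]
  proof eventually_elim
    case (elim K)
    then show ?case
      using scaled_root_bound root_pos K_threshold_pos by (simp add: abs_of_pos)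
  qed
qed

lemma root_bigo: "root \<in> O[at_top](\<lambda>K. 1 / K)"
proof -
  have "(\<lambda>K. K * root K * (1 / K)) \<in> O[at_top](\<lambda>K. 1 * (1 / K))"
    using landau_o.big.mult[OF scaled_root_bigo landau_o.big_refl] .
  moreover have "\<forall>\<^sub>F K in at_top. K * root K * (1 / K) = root K"
    using eventually_gt_at_top[of 0] by eventually_elim simp
  ultimately show ?thesis
    by (simp add: landau_o.big.in_cong)
qed

lemma I2_asymptotics: "(\<lambda>K. I2 K - (m4' - m0) / a2) \<in> O[at_top](\<lambda>K. 1 / K)"
proof -
  have "(\<lambda>K. I2 K - (m4' - m0) / a2) = (\<lambda>K. - (1 / a2) * root K)"
    by (simp add: I2_def diff_divide_distrib)
  then show ?thesis
    using root_bigo a2_pos by simp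
qed

lemma S_asymptotics: "(\<lambda>K. S K - (r2 + m2' - m4') / a2) \<in> O[at_top](\<lambda>K. 1 / K)"
proof -
  have "(\<lambda>K. S K - (r2 + m2' - m4') / a2) = (\<lambda>K. (1 / a2) * root K)"
    using a2_pos by (simp add: S_def I2_def sigma2_def field_simps)
  then show ?thesis
    using root_bigo a2_pos by simp
qed

lemma R_asymptotics: "(\<lambda>K. R K - K / b * (b - m4')) \<in> O[at_top](\<lambda>_. 1)"
proof -
  have "\<forall>\<^sub>F K in at_top. R K - K / b * (b - m4') = (1 / b) * (K * root K) - sigma2"
    using eventually_gt_at_top[of 0]
  proof eventually_elim
    case (elim K)
    then show ?case
      using birth_factor_at_equilibrium[OF elim] b_pos
      by (simp add: S_def field_simps)
  qed
  moreover have "(\<lambda>K. (1 / b) * (K * root K) - sigma2) \<in> O[at_top](\<lambda>_. 1)"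
    using scaled_root_bigo b_pos by (intro sum_in_bigo) simp_all
  ultimately show ?thesis
    by (simp add: landau_o.big.in_cong)
qed

end

theorem mainTheorem15:
  fixes b a1 a2 a3 be1 be2 g1 g2 e1 e2 r1 r2 r3 m0 m1' m2' m3' m4' :: real
  assumes pos: "b > 0" "a1 > 0" "a2 > 0" "a3 > 0" "be1 > 0" "be2 > 0" "g1 > 0" "g2 > 0"
      "e1 > 0" "e2 > 0" "r1 > 0" "r2 > 0" "r3 > 0" "m0 > 0" "m1' > 0" "m2' > 0" "m3' > 0" "m4' > 0"
    and hb: "b > m0" "b > r1 + m1'" "b > r2 + m2'" "b > r3 + m3'" "b > m4'"
    and hmu: "m0 < m4'" "m4' < m1'" "m4' < m2'" "m4' < m3'"
    and hsig: "(r1 + m1' - m0) / a1 < (r2 + m2' - m0) / a2"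
              "(r2 + m2' - m0) / a2 < (r3 + m3' - m0) / a3"
  shows "\<exists>S I2 R :: real \<Rightarrow> real.
    (\<forall>K > b * ((r2 + m2' - m0) / a2) / (b - m0).
        S K > 0 \<and> I2 K > 0 \<and> R K > 0 \<and>
        is_equilibrium b K a1 a2 a3 be1 be2 g1 g2 e1 e2 r1 r2 r3 m0 m1' m2' m3' m4' (S K) 0 (I2 K) 0 (R K) \<and>
        (\<forall>s i r. s > 0 \<and> i > 0 \<and> r > 0 \<and>
           is_equilibrium b K a1 a2 a3 be1 be2 g1 g2 e1 e2 r1 r2 r3 m0 m1' m2' m3' m4' s 0 i 0 r
           \<longrightarrow> s = S K \<and> i = I2 K \<and> r = R K) \<and>
        I2 K < (m4' - m0) / a2 \<and>
        (r2 + m2' - m4') / a2 < S K \<and> S K < (r2 + m2' - m0) / a2) \<and>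
    (\<forall>K1 K2. b * ((r2 + m2' - m0) / a2) / (b - m0) < K1 \<and> K1 < K2 \<longrightarrow>
        I2 K1 < I2 K2 \<and> S K2 < S K1) \<and>
    (\<lambda>K. R K - K / b * (b - m4')) \<in> O[at_top](\<lambda>K. 1) \<and>
    (\<lambda>K. I2 K - (m4' - m0) / a2) \<in> O[at_top](\<lambda>K. 1 / K) \<and>
    (\<lambda>K. S K - (r2 + m2' - m4') / a2) \<in> O[at_top](\<lambda>K. 1 / K)"
proof -
  interpret I2_equilibrium b a2 r2 m0 m2' m4'
    using pos hmu hb by unfold_locales simp_all
  have threshold: "b * ((r2 + m2' - m0) / a2) / (b - m0) = K_threshold"
    by (simp add: K_threshold_def sigma2_def)
  have equilibrium_iff: "is_equilibrium b K a1 a2 a3 be1 be2 g1 g2 e1 e2 r1 r2 r3 m0 m1' m2' m3' m4'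
      s 0 i 0 r \<longleftrightarrow> s = S K \<and> i = I2 K \<and> r = R K"
    if "K_threshold < K" "s > 0" "i > 0" "r > 0" for K s i r
    using positive_equilibrium_iff that K_threshold_pos by simp
  have monotone: "I2 K1 < I2 K2 \<and> S K2 < S K1" if "K_threshold < K1" "K1 < K2" for K1 K2
    using equilibrium_strict_monotone that K_threshold_pos by simp
  show ?thesis
    unfolding threshold
    using equilibrium_bounds equilibrium_iff monotone R_asymptotics I2_asymptotics S_asymptotics
    by (intro exI[of _ S] exI[of _ I2] exI[of _ R] conjI allI impI; (elim conjE)?) simp_all
qed

end
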